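(* Outer Multi-Objective RL (OMORL), Functions from Occupancy Measures to Reals (FOMR) and Functions from Trajectory Lotteries to Reals (FTLR) are equally expressive: for every environment $E$, $\mathrm{Ord}_{\mathrm{OMORL}}(E)=\mathrm{Ord}_{\mathrm{FOMR}}(E)=\mathrm{Ord}_{\mathrm{FTLR}}(E)$.
   Context: An environment is a tuple $E=(\mathcal S,\mathcal A,\mathcal T,\mathcal I)$ where $\mathcal S,\mathcal A$ are finite nonempty sets, $\mathcal T:\mathcal S\times\mathcal A\to\Delta(\mathcal S)$ and $\mathcal I\in\Delta(\mathcal S)$. A policy is a map $\pi:\mathcal S\to\Delta(\mathcal A)$ (stationary, possibly stochastic); $\Pi^E$ denotes the set of all policies. A trajectory $\xi=(s_0,a_0,s_1,a_1,\dots)$ is generated under $\pi$ by $s_0\sim\mathcal I$, $a_t\sim\pi(s_t)$, $s_{t+1}\sim\mathcal T(s_t,a_t)$; $\mathbb E^\pi_\xi,\mathbb P^\pi$ denote expectation and probability under this distribution. An objective-specification formalism $X$ assigns to each environment $E$ a set of objective specifications, each inducing a total preorder $\succeq$ on $\Pi^E$; $\mathrm{Ord}_X(E)$ is the set of total preorders so induced. A specification defining a scalar $J:\Pi^E\to\mathbb R$ induces $\pi_1\succeq\pi_2\iff J(\pi_1)\ge J(\pi_2)$. Occupancy measure: for $\gamma\in[0,1)$, $\vec m_\gamma(\pi)\in\mathbb R^{\mathcal S\times\mathcal A\times\mathcal S}$, $\vec m_\gamma(\pi)[s,a,s']=\sum_{t=0}^\infty\gamma^t\,\mathbb P^\pi[s_t=s,a_t=a,s_{t+1}=s']$,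 and $\vec m_\gamma(\Pi^E)=\{\vec m_\gamma(\pi):\pi\in\Pi^E\}$. Trajectory lottery: $L_{k,\pi}$ is the distribution of $(s_0,a_0,\dots,a_{k-1},s_k)$ under $\pi$, $L_\pi=(L_{0,\pi},L_{1,\pi},\dots)$, and $L_{\Pi^E}=\{L_\pi:\pi\in\Pi^E\}$. OMORL: specification $(k,\mathcal R,f,\gamma)$ with $k\in\mathbb N$, $\mathcal R:\mathcal S\times\mathcal A\times\mathcal S\to\mathbb R^k$ with components $\mathcal R_i$, $f:\mathbb R^k\to\mathbb R$, $\gamma\in[0,1)$; $J(\pi)=f(J_1(\pi),\dots,J_k(\pi))$ with $J_i(\pi)=\mathbb E^\pi_\xi[\sum_{t=0}^\infty\gamma^t\mathcal R_i(s_t,a_t,s_{t+1})]$. FOMR: specification $(f,\gamma)$ with $\gamma\in[0,1)$, $f:\vec m_\gamma(\Pi^E)\to\mathbb R$; $J(\pi)=f(\vec m_\gamma(\pi))$. FTLR: specification $(f)$ with $f:L_{\Pi^E}\to\mathbb R$; $J(\pi)=f(L_\pi)$. *)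

theory Defs
  imports "HOL-Probability.Probability"
begin

text \<open>An environment E = (S, A, T, I) is given by finite nonempty types 's, 'a
  (all HOL types are nonempty), a transition kernel T and an initial distribution I. A policy is any map 's => 'a pmf;
  the set of all policies is UNIV.\<close>

type_synonym ('s, 'a) policy = "'s \<Rightarrow> 'a pmf"

text \<open>Distribution of the length-k trajectory prefix (s0,a0,...,a_{k-1},s_k),
  represented as the list [(s0,a0),...,(s_{k-1},a_{k-1})] together with s_k.\<close>

fun traj :: "('s \<Rightarrow> 'a \<Rightarrow> 's pmf) \<Rightarrow> 's pmf \<Rightarrow> ('s, 'a) policy \<Rightarrow> nat
             \<Rightarrow> (('s \<times> 'a) list \<times> 's) pmf" where
  "traj T I \<pi> 0 = map_pmf (\<lambda>s. ([], s)) I"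
| "traj T I \<pi> (Suc k) =
     bind_pmf (traj T I \<pi> k) (\<lambda>(h, s).
       bind_pmf (\<pi> s) (\<lambda>a. map_pmf (\<lambda>s'. (h @ [(s, a)], s')) (T s a)))"

text \<open>The transition (s_t, a_t, s_{t+1}) of a prefix of length > t.\<close>
definition step :: "('s \<times> 'a) list \<times> 's \<Rightarrow> nat \<Rightarrow> 's \<times> 'a \<times> 's" where
  "step x t = (fst (fst x ! t), snd (fst x ! t),
               (if Suc t < length (fst x) then fst (fst x ! Suc t) else snd x))"

definition lottery :: "('s \<Rightarrow> 'a \<Rightarrow> 's pmf) \<Rightarrow> 's pmf \<Rightarrow> ('s, 'a) policy
                       \<Rightarrow> nat \<Rightarrow> (('s \<times> 'a) list \<times> 's) pmf" where
  "lottery T I \<pi> = (\<lambda>k. traj T I \<pi> k)"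

definition occupancy :: "('s \<Rightarrow> 'a \<Rightarrow> 's pmf) \<Rightarrow> 's pmf \<Rightarrow> real \<Rightarrow> ('s, 'a) policy
                         \<Rightarrow> ('s \<times> 'a \<times> 's) \<Rightarrow> real" where
  "occupancy T I \<gamma> \<pi> = (\<lambda>(s, a, s').
     (\<Sum>t. \<gamma> ^ t * measure_pmf.prob (traj T I \<pi> (Suc t)) {x. step x t = (s, a, s')}))"

text \<open>Expected discounted return E[sum_t gamma^t R(s_t,a_t,s_{t+1})], taken as the
  limit of the expectations of the truncated returns sum_{t<n} gamma^t R(...).\<close>
definition disc_return :: "('s \<Rightarrow> 'a \<Rightarrow> 's pmf) \<Rightarrow> 's pmf \<Rightarrow> real
                           \<Rightarrow> ('s \<Rightarrow> 'a \<Rightarrow> 's \<Rightarrow> real) \<Rightarrow> ('s, 'a) policy \<Rightarrow> real" where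
  "disc_return T I \<gamma> R \<pi> =
     lim (\<lambda>n. measure_pmf.expectation (traj T I \<pi> n)
               (\<lambda>x. \<Sum>t<n. \<gamma> ^ t * (case step x t of (s, a, s') \<Rightarrow> R s a s')))"

definition ord_of :: "('p \<Rightarrow> real) \<Rightarrow> ('p \<times> 'p) set" where
  "ord_of J = {(p1, p2). J p1 \<ge> J p2}"

text \<open>OMORL: specification (k, R, f, gamma), R = (R_0,...,R_{k-1}), f : R^k -> R
  (R^k rendered as real lists of length k).\<close>
definition J_OMORL :: "('s \<Rightarrow> 'a \<Rightarrow> 's pmf) \<Rightarrow> 's pmf \<Rightarrow> nat
    \<Rightarrow> (nat \<Rightarrow> 's \<Rightarrow> 'a \<Rightarrow> 's \<Rightarrow> real) \<Rightarrow> (real list \<Rightarrow> real) \<Rightarrow> real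
    \<Rightarrow> ('s, 'a) policy \<Rightarrow> real" where
  "J_OMORL T I k R f \<gamma> \<pi> = f (map (\<lambda>i. disc_return T I \<gamma> (R i) \<pi>) [0..<k])"

definition Ord_OMORL :: "('s \<Rightarrow> 'a \<Rightarrow> 's pmf) \<Rightarrow> 's pmf
    \<Rightarrow> (('s, 'a) policy \<times> ('s, 'a) policy) set set" where
  "Ord_OMORL T I = {ord_of (J_OMORL T I k R f \<gamma>) | k R f \<gamma>. 0 \<le> \<gamma> \<and> \<gamma> < 1}"

text \<open>FOMR: specification (f, gamma), f : m_gamma(Pi) -> R; only its values on the
  set of occupancy measures matter, so f is taken total.\<close>
definition Ord_FOMR :: "('s \<Rightarrow> 'a \<Rightarrow> 's pmf) \<Rightarrow> 's pmf
    \<Rightarrow> (('s, 'a) policy \<times> ('s, 'a) policy) set set" where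
  "Ord_FOMR T I = {ord_of (\<lambda>\<pi>. f (occupancy T I \<gamma> \<pi>)) | f \<gamma>. 0 \<le> \<gamma> \<and> \<gamma> < 1}"

text \<open>FTLR: specification f : L_Pi -> R (taken total likewise).\<close>
definition Ord_FTLR :: "('s \<Rightarrow> 'a \<Rightarrow> 's pmf) \<Rightarrow> 's pmf
    \<Rightarrow> (('s, 'a) policy \<times> ('s, 'a) policy) set set" where
  "Ord_FTLR T I = {ord_of (\<lambda>\<pi>. f (lottery T I \<pi>)) | f. True}"

end

theory Submission
  imports Defs
begin

text \<open>The discounted return of a reward R is the linear functional
  \<Sum> R(s,a,s') m_\<gamma>(\<pi>)[s,a,s'] of the occupancy measure, so every OMORL objective is a function
  of m_\<gamma>(\<pi>), and the indicator rewards of the finitely many transitions recover m_\<gamma>(\<pi>)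
  itself. The occupancy measure is a function of the trajectory lottery by its very definition.
  Conversely, for \<gamma> > 0 the occupancy measure determines the lottery: summing out s' leaves
  \<pi>(a|s) times the discounted visitation of s, which is positive at every state reachable under
  \<pi>; so m_\<gamma>(\<pi>) fixes \<pi> on the reachable states, and the trajectory distributions depend on
  \<pi> only there.\<close>

lemma pmf_bind_map_Pair:
  "pmf (bind_pmf M (\<lambda>x. map_pmf (Pair x) (K x))) (x, y) = pmf M x * pmf (K x) y"
proof -
  have "pmf (map_pmf (Pair x') (K x')) (x, y) = indicator {x} x' * pmf (K x) y" for x'
    using pmf_map_inj'[of "Pair x" "K x" y] by (cases "x' = x") (auto simp: pmf_eq_0_set_pmf inj_def)
  then show ?thesis
    by (simp add: pmf_bind measure_pmf_single)
qed

lemma sum_pmf_UNIV [simp]: "(\<Sum>x\<in>UNIV. pmf p x) = 1" for p :: "'a::finite pmf"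
  by (rule sum_pmf_eq_1) simp_all

lemma summable_discounted:
  fixes \<gamma> :: real
  assumes "0 \<le> \<gamma>" "\<gamma> < 1" "\<And>t. \<bar>f t\<bar> \<le> 1"
  shows "summable (\<lambda>t. \<gamma> ^ t * f t)"
proof (rule summable_comparison_test)
  show "\<exists>N. \<forall>t\<ge>N. norm (\<gamma> ^ t * f t) \<le> \<gamma> ^ t"
    using assms by (auto simp: abs_mult intro!: mult_left_le)
  show "summable (\<lambda>t. \<gamma> ^ t)"
    using assms by (intro summable_geometric) simp
qed

lemma summable_discounted_pmf:
  fixes \<gamma> :: real
  assumes "0 \<le> \<gamma>" "\<gamma> < 1"
  shows "summable (\<lambda>t. \<gamma> ^ t * pmf (M t) x)"
  using assms by (intro summable_discounted) (simp_all add: pmf_le_1)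

definition state_dist :: "('s \<Rightarrow> 'a \<Rightarrow> 's pmf) \<Rightarrow> 's pmf \<Rightarrow> ('s, 'a) policy \<Rightarrow> nat \<Rightarrow> 's pmf" where
  "state_dist T I \<pi> t = map_pmf snd (traj T I \<pi> t)"

definition transition_dist :: "('s \<Rightarrow> 'a \<Rightarrow> 's pmf) \<Rightarrow> 's pmf \<Rightarrow> ('s, 'a) policy \<Rightarrow> nat
    \<Rightarrow> ('s \<times> 'a \<times> 's) pmf" where
  "transition_dist T I \<pi> t = map_pmf (\<lambda>x. step x t) (traj T I \<pi> (Suc t))"

definition visitation :: "('s \<Rightarrow> 'a \<Rightarrow> 's pmf) \<Rightarrow> 's pmf \<Rightarrow> real \<Rightarrow> ('s, 'a) policy \<Rightarrow> 's \<Rightarrow> real" where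
  "visitation T I \<gamma> \<pi> s = (\<Sum>t. \<gamma> ^ t * pmf (state_dist T I \<pi> t) s)"

lemma length_traj: "x \<in> set_pmf (traj T I \<pi> k) \<Longrightarrow> length (fst x) = k"
  by (induction k arbitrary: x) auto

lemma step_snoc_last: "length h = t \<Longrightarrow> step (h @ [(s, a)], s') t = (s, a, s')"
  by (simp add: step_def nth_append)

lemma step_snoc: "t < length h \<Longrightarrow> step (h @ [(s, a)], s') t = step (h, s) t"
  by (auto simp: step_def nth_append)

lemma map_pmf_traj_Suc:
  "map_pmf g (traj T I \<pi> (Suc k)) = bind_pmf (traj T I \<pi> k) (\<lambda>(h, s).
     bind_pmf (\<pi> s) (\<lambda>a. map_pmf (\<lambda>s'. g (h @ [(s, a)], s')) (T s a)))"
  by (simp add: map_bind_pmf split_def map_pmf_comp)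

lemma transition_dist_eq_bind:
  "transition_dist T I \<pi> t = bind_pmf (state_dist T I \<pi> t)
     (\<lambda>s. map_pmf (Pair s) (bind_pmf (\<pi> s) (\<lambda>a. map_pmf (Pair a) (T s a))))"
proof -
  have "transition_dist T I \<pi> t = bind_pmf (traj T I \<pi> t) (\<lambda>(h, s).
      bind_pmf (\<pi> s) (\<lambda>a. map_pmf (\<lambda>s'. step (h @ [(s, a)], s') t) (T s a)))"
    unfolding transition_dist_def by (rule map_pmf_traj_Suc)
  also have "\<dots> = bind_pmf (traj T I \<pi> t) (\<lambda>(h, s).
      bind_pmf (\<pi> s) (\<lambda>a. map_pmf (\<lambda>s'. (s, a, s')) (T s a)))"
    by (intro bind_pmf_cong refl) (auto dest!: length_traj simp: step_snoc_last)
  finally show ?thesis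
    by (simp add: state_dist_def bind_map_pmf map_bind_pmf map_pmf_comp split_def)
qed

lemma pmf_transition_dist:
  "pmf (transition_dist T I \<pi> t) (s, a, s') =
     pmf (state_dist T I \<pi> t) s * pmf (\<pi> s) a * pmf (T s a) s'"
  by (simp add: transition_dist_eq_bind pmf_bind_map_Pair)

lemma map_pmf_step_traj:
  "t < n \<Longrightarrow> map_pmf (\<lambda>x. step x t) (traj T I \<pi> n) = transition_dist T I \<pi> t"
proof (induction n)
  case 0
  then show ?case by simp
next
  case (Suc n)
  show ?case
  proof (cases "t = n")
    case True
    then show ?thesis by (simp add: transition_dist_def)
  next
    case False
    with Suc.prems have "t < n" by simp
    have "map_pmf (\<lambda>x. step x t) (traj T I \<pi> (Suc n)) = bind_pmf (traj T I \<pi> n) (\<lambda>(h, s).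
        bind_pmf (\<pi> s) (\<lambda>a. map_pmf (\<lambda>s'. step (h @ [(s, a)], s') t) (T s a)))"
      by (rule map_pmf_traj_Suc)
    also have "\<dots> = map_pmf (\<lambda>x. step x t) (traj T I \<pi> n)"
      unfolding map_pmf_def using \<open>t < n\<close>
      by (intro bind_pmf_cong refl) (auto dest!: length_traj simp: step_snoc)
    finally show ?thesis using Suc.IH \<open>t < n\<close> by simp
  qed
qed

lemma occupancy_eq_suminf:
  "occupancy T I \<gamma> \<pi> p = (\<Sum>t. \<gamma> ^ t * pmf (transition_dist T I \<pi> t) p)"
proof -
  have "{x. step x t = p} = (\<lambda>x. step x t) -` {p}" for t
    by auto
  then show ?thesis
    by (cases p) (simp add: occupancy_def transition_dist_def pmf_map)
qed

lemma integrable_measure_pmf_comp_finite: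
  fixes g :: "'b::finite \<Rightarrow> real"
  shows "integrable (measure_pmf M) (\<lambda>x. g (h x))"
proof -
  have "integrable (measure_pmf (map_pmf h M)) g"
    by (rule integrable_measure_pmf_finite) simp
  then show ?thesis
    by simp
qed

lemma expectation_truncated_return:
  fixes T :: "'s::finite \<Rightarrow> 'a::finite \<Rightarrow> 's pmf" and R :: "'s \<times> 'a \<times> 's \<Rightarrow> real"
  shows "measure_pmf.expectation (traj T I \<pi> n) (\<lambda>x. \<Sum>t<n. \<gamma> ^ t * R (step x t)) =
    (\<Sum>p\<in>UNIV. R p * (\<Sum>t<n. \<gamma> ^ t * pmf (transition_dist T I \<pi> t) p))"
proof -
  have integrable: "integrable (measure_pmf (traj T I \<pi> n)) (\<lambda>x. R (step x t))" for t
    by (rule integrable_measure_pmf_comp_finite)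
  have "measure_pmf.expectation (traj T I \<pi> n) (\<lambda>x. R (step x t)) =
      measure_pmf.expectation (transition_dist T I \<pi> t) R" if "t < n" for t
    using map_pmf_step_traj[OF that, of T I \<pi>] integral_map_pmf[of "\<lambda>x. step x t" "traj T I \<pi> n" R]
    by simp
  also have "measure_pmf.expectation (transition_dist T I \<pi> t) R =
      (\<Sum>p\<in>UNIV. R p * pmf (transition_dist T I \<pi> t) p)" for t
    by (subst integral_measure_pmf_real[where A = UNIV]) auto
  finally have "measure_pmf.expectation (traj T I \<pi> n) (\<lambda>x. \<Sum>t<n. \<gamma> ^ t * R (step x t)) =
      (\<Sum>t<n. \<gamma> ^ t * (\<Sum>p\<in>UNIV. R p * pmf (transition_dist T I \<pi> t) p))"
    by (subst Bochner_Integration.integral_sum) (simp_all add: integrable)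
  also have "\<dots> = (\<Sum>p\<in>UNIV. R p * (\<Sum>t<n. \<gamma> ^ t * pmf (transition_dist T I \<pi> t) p))"
    by (simp add: sum_distrib_left sum_distrib_right mult_ac sum.swap[of _ "{..<n}"])
  finally show ?thesis .
qed

lemma disc_return_eq_sum_occupancy:
  fixes T :: "'s::finite \<Rightarrow> 'a::finite \<Rightarrow> 's pmf"
  assumes "0 \<le> \<gamma>" "\<gamma> < 1"
  shows "disc_return T I \<gamma> R \<pi> = (\<Sum>(s, a, s')\<in>UNIV. R s a s' * occupancy T I \<gamma> \<pi> (s, a, s'))"
proof -
  let ?R = "\<lambda>(s, a, s'). R s a s'"
  have "(\<lambda>n. \<Sum>p\<in>UNIV. ?R p * (\<Sum>t<n. \<gamma> ^ t * pmf (transition_dist T I \<pi> t) p))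
      \<longlonglongrightarrow> (\<Sum>p\<in>UNIV. ?R p * occupancy T I \<gamma> \<pi> p)"
    unfolding occupancy_eq_suminf
    by (intro tendsto_sum tendsto_mult tendsto_const summable_LIMSEQ summable_discounted_pmf assms)
  then show ?thesis
    unfolding disc_return_def expectation_truncated_return[where R = ?R]
    by (simp add: limI split_def)
qed

lemma sum_occupancy_next_state:
  fixes T :: "'s::finite \<Rightarrow> 'a::finite \<Rightarrow> 's pmf"
  assumes "0 \<le> \<gamma>" "\<gamma> < 1"
  shows "(\<Sum>s'\<in>UNIV. occupancy T I \<gamma> \<pi> (s, a, s')) = pmf (\<pi> s) a * visitation T I \<gamma> \<pi> s"
proof -
  have "(\<Sum>s'\<in>UNIV. occupancy T I \<gamma> \<pi> (s, a, s')) =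
      (\<Sum>t. \<Sum>s'\<in>UNIV. \<gamma> ^ t * pmf (transition_dist T I \<pi> t) (s, a, s'))"
    unfolding occupancy_eq_suminf using assms
    by (intro suminf_sum[symmetric] summable_discounted_pmf)
  also have "\<dots> = (\<Sum>t. \<gamma> ^ t * pmf (state_dist T I \<pi> t) s * pmf (\<pi> s) a)"
    by (simp add: pmf_transition_dist mult.assoc flip: sum_distrib_left)
  also have "\<dots> = pmf (\<pi> s) a * visitation T I \<gamma> \<pi> s"
    unfolding visitation_def using assms
    by (subst suminf_mult2[symmetric]) (simp_all add: summable_discounted_pmf mult.commute)
  finally show ?thesis .
qed

lemma sum_occupancy_eq_visitation:
  fixes T :: "'s::finite \<Rightarrow> 'a::finite \<Rightarrow> 's pmf"
  assumes "0 \<le> \<gamma>" "\<gamma> < 1"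
  shows "(\<Sum>a\<in>UNIV. \<Sum>s'\<in>UNIV. occupancy T I \<gamma> \<pi> (s, a, s')) = visitation T I \<gamma> \<pi> s"
  by (simp add: sum_occupancy_next_state[OF assms] flip: sum_distrib_right)

lemma visitation_pos:
  assumes "0 < \<gamma>" "\<gamma> < 1" "s \<in> set_pmf (state_dist T I \<pi> t)"
  shows "0 < visitation T I \<gamma> \<pi> s"
proof -
  have "0 < \<gamma> ^ t * pmf (state_dist T I \<pi> t) s"
    using assms by (simp add: pmf_positive)
  then show ?thesis
    unfolding visitation_def using assms
    by (subst suminf_pos_iff) (auto intro: summable_discounted_pmf)
qed

lemma policy_eq_if_occupancy_eq:
  fixes T :: "'s::finite \<Rightarrow> 'a::finite \<Rightarrow> 's pmf"
  assumes discount: "0 < \<gamma>" "\<gamma> < 1" and occ: "occupancy T I \<gamma> \<pi>1 = occupancy T I \<gamma> \<pi>2"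
    and "s \<in> set_pmf (state_dist T I \<pi>1 t)"
  shows "\<pi>1 s = \<pi>2 s"
proof (rule pmf_eqI)
  fix a
  have visitation_eq: "visitation T I \<gamma> \<pi>2 s = visitation T I \<gamma> \<pi>1 s"
    using assms by (simp flip: sum_occupancy_eq_visitation)
  have "pmf (\<pi>1 s) a * visitation T I \<gamma> \<pi>1 s = (\<Sum>s'\<in>UNIV. occupancy T I \<gamma> \<pi>1 (s, a, s'))"
    using discount by (simp add: sum_occupancy_next_state)
  also have "\<dots> = (\<Sum>s'\<in>UNIV. occupancy T I \<gamma> \<pi>2 (s, a, s'))"
    by (simp add: occ)
  also have "\<dots> = pmf (\<pi>2 s) a * visitation T I \<gamma> \<pi>1 s"
    using discount by (simp add: sum_occupancy_next_state visitation_eq)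
  finally have "pmf (\<pi>1 s) a * visitation T I \<gamma> \<pi>1 s = pmf (\<pi>2 s) a * visitation T I \<gamma> \<pi>1 s" .
  moreover have "0 < visitation T I \<gamma> \<pi>1 s"
    using assms by (intro visitation_pos)
  ultimately show "pmf (\<pi>1 s) a = pmf (\<pi>2 s) a"
    by simp
qed

lemma traj_cong_reachable:
  assumes "\<And>t s. s \<in> set_pmf (state_dist T I \<pi>1 t) \<Longrightarrow> \<pi>1 s = \<pi>2 s"
  shows "traj T I \<pi>1 k = traj T I \<pi>2 k"
proof (induction k)
  case 0
  show ?case by simp
next
  case (Suc k)
  have "traj T I \<pi>1 (Suc k) = bind_pmf (traj T I \<pi>1 k) (\<lambda>(h, s).
      bind_pmf (\<pi>2 s) (\<lambda>a. map_pmf (\<lambda>s'. (h @ [(s, a)], s')) (T s a)))"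
    unfolding traj.simps using assms[of _ k]
    by (intro bind_pmf_cong refl) (force simp: state_dist_def)
  also have "\<dots> = traj T I \<pi>2 (Suc k)"
    using Suc.IH by simp
  finally show ?case .
qed

lemma lottery_eq_if_occupancy_eq:
  fixes T :: "'s::finite \<Rightarrow> 'a::finite \<Rightarrow> 's pmf"
  assumes "0 < \<gamma>" "\<gamma> < 1" "occupancy T I \<gamma> \<pi>1 = occupancy T I \<gamma> \<pi>2"
  shows "lottery T I \<pi>1 = lottery T I \<pi>2"
  unfolding lottery_def using policy_eq_if_occupancy_eq[OF assms]
  by (intro ext traj_cong_reachable)

lemma finite_UNIV_enumeration:
  "\<exists>(n :: nat) (e :: nat \<Rightarrow> 'p::finite) d. \<forall>p. d p < n \<and> e (d p) = p"
proof -
  obtain xs :: "'p list" where "set xs = UNIV"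
    using finite_list[of "UNIV :: 'p set"] by auto
  then have "\<forall>p. \<exists>i. i < length xs \<and> xs ! i = p"
    by (metis UNIV_I in_set_conv_nth)
  then show ?thesis
    by metis
qed

lemma Ord_OMORL_subset_Ord_FOMR:
  fixes T :: "'s::finite \<Rightarrow> 'a::finite \<Rightarrow> 's pmf"
  shows "Ord_OMORL T I \<subseteq> Ord_FOMR T I"
proof
  fix r assume "r \<in> Ord_OMORL T I"
  then obtain k R f \<gamma> where r: "r = ord_of (J_OMORL T I k R f \<gamma>)" and discount: "0 \<le> \<gamma>" "\<gamma> < 1"
    unfolding Ord_OMORL_def by blast
  define F where "F m = f (map (\<lambda>i. \<Sum>(s, a, s')\<in>UNIV. R i s a s' * m (s, a, s')) [0..<k])"
    for m :: "'s \<times> 'a \<times> 's \<Rightarrow> real"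
  have J: "J_OMORL T I k R f \<gamma> = (\<lambda>\<pi>. F (occupancy T I \<gamma> \<pi>))"
    by (rule ext) (simp add: J_OMORL_def F_def disc_return_eq_sum_occupancy[OF discount])
  show "r \<in> Ord_FOMR T I"
    unfolding Ord_FOMR_def r J by (intro CollectI exI[of _ F] exI[of _ \<gamma>]) (simp add: discount)
qed

lemma Ord_FOMR_subset_Ord_OMORL:
  fixes T :: "'s::finite \<Rightarrow> 'a::finite \<Rightarrow> 's pmf"
  shows "Ord_FOMR T I \<subseteq> Ord_OMORL T I"
proof
  fix r assume "r \<in> Ord_FOMR T I"
  then obtain f \<gamma> where r: "r = ord_of (\<lambda>\<pi>. f (occupancy T I \<gamma> \<pi>))" and discount: "0 \<le> \<gamma>" "\<gamma> < 1"
    unfolding Ord_FOMR_def by blast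
  obtain n and e :: "nat \<Rightarrow> 's \<times> 'a \<times> 's" and d where d: "\<And>p. d p < n" "\<And>p. e (d p) = p"
    using finite_UNIV_enumeration by blast
  define R where "R i s a s' = (if e i = (s, a, s') then 1 else 0 :: real)" for i s a s'
  define F where "F xs = f (\<lambda>p. xs ! d p)" for xs :: "real list"
  have "disc_return T I \<gamma> (R i) \<pi> = (\<Sum>p\<in>UNIV. if p = e i then occupancy T I \<gamma> \<pi> p else 0)"
    for i \<pi>
    unfolding disc_return_eq_sum_occupancy[OF discount] by (rule sum.cong) (auto simp: R_def)
  then have "disc_return T I \<gamma> (R i) \<pi> = occupancy T I \<gamma> \<pi> (e i)" for i \<pi>
    by simp
  then have J: "(\<lambda>\<pi>. f (occupancy T I \<gamma> \<pi>)) = J_OMORL T I n R F \<gamma>"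
    by (intro ext) (simp add: J_OMORL_def F_def d)
  show "r \<in> Ord_OMORL T I"
    unfolding Ord_OMORL_def r J
    by (intro CollectI exI[of _ n] exI[of _ R] exI[of _ F] exI[of _ \<gamma>]) (simp add: discount)
qed

lemma Ord_FOMR_subset_Ord_FTLR:
  fixes T :: "'s \<Rightarrow> 'a \<Rightarrow> 's pmf"
  shows "Ord_FOMR T I \<subseteq> Ord_FTLR T I"
proof
  fix r assume "r \<in> Ord_FOMR T I"
  then obtain f \<gamma> where r: "r = ord_of (\<lambda>\<pi>. f (occupancy T I \<gamma> \<pi>))"
    unfolding Ord_FOMR_def by blast
  define F where "F L = f (\<lambda>(s, a, s').
      \<Sum>t. \<gamma> ^ t * measure_pmf.prob (L (Suc t)) {x. step x t = (s, a, s')})"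
    for L :: "nat \<Rightarrow> (('s \<times> 'a) list \<times> 's) pmf"
  have J: "(\<lambda>\<pi>. f (occupancy T I \<gamma> \<pi>)) = (\<lambda>\<pi>. F (lottery T I \<pi>))"
    by (simp add: F_def occupancy_def lottery_def)
  show "r \<in> Ord_FTLR T I"
    unfolding Ord_FTLR_def r J by (intro CollectI exI[of _ F]) simp
qed

lemma Ord_FTLR_subset_Ord_FOMR:
  fixes T :: "'s::finite \<Rightarrow> 'a::finite \<Rightarrow> 's pmf"
  shows "Ord_FTLR T I \<subseteq> Ord_FOMR T I"
proof
  fix r assume "r \<in> Ord_FTLR T I"
  then obtain f where r: "r = ord_of (\<lambda>\<pi>. f (lottery T I \<pi>))"
    unfolding Ord_FTLR_def by blast
  \<comment> \<open>any discount in (0, 1) would do\<close>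
  let ?m = "occupancy T I (1 / 2)"
  define F where "F m = f (lottery T I (SOME \<pi>. ?m \<pi> = m))" for m
  have "F (?m \<pi>) = f (lottery T I \<pi>)" for \<pi>
  proof -
    have "?m (SOME \<pi>'. ?m \<pi>' = ?m \<pi>) = ?m \<pi>"
      by (rule someI[where x = \<pi>]) (rule refl)
    then have "lottery T I (SOME \<pi>'. ?m \<pi>' = ?m \<pi>) = lottery T I \<pi>"
      by (rule lottery_eq_if_occupancy_eq[rotated 2]) simp_all
    then show ?thesis
      by (simp add: F_def)
  qed
  then have J: "(\<lambda>\<pi>. f (lottery T I \<pi>)) = (\<lambda>\<pi>. F (?m \<pi>))"
    by simp
  show "r \<in> Ord_FOMR T I"
    unfolding Ord_FOMR_def r J by (intro CollectI exI[of _ F] exI[of _ "1 / 2"]) simp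
qed

theorem theorem2:
  fixes T :: "'s::finite \<Rightarrow> 'a::finite \<Rightarrow> 's pmf" and I :: "'s pmf"
  shows "Ord_OMORL T I = Ord_FOMR T I \<and> Ord_FOMR T I = Ord_FTLR T I"
  using Ord_OMORL_subset_Ord_FOMR Ord_FOMR_subset_Ord_OMORL
    Ord_FOMR_subset_Ord_FTLR Ord_FTLR_subset_Ord_FOMR
  by (metis subset_antisym)

end
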